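(* Let $\mathcal J$ be a generalized almost complex structure and $D$ a torsion-free generalized connection on a Courant algebroid $E$. For $u\in E$ let $A_u$ be the endomorphism $v\mapsto(D_v\mathcal J)u$ of $E$ and $A_u^{\mathrm{sym}}$ its $\langle\cdot,\cdot\rangle$-symmetric part. Define $$\tilde D_uv=D_uv-\tfrac14\{A_u^{\mathrm{sym}},\mathcal J\}v-\tfrac12\mathcal J(D_u\mathcal J)v,$$ where $\{X,Y\}=XY+YX$. Then $\tilde D$ is a generalized connection with $\tilde D\mathcal J=0$, and its torsion satisfies $T^{\tilde D}(u,v,w)=\frac14N_{\mathcal J}(u,v,w)$ for all $u,v,w$. In particular, if $\mathcal J$ is integrable, then $\tilde D$ is torsion-free (and preserves $\mathcal J$).
   Context: A Courant algebroid on $M$ is a real vector bundle $E\to M$ with nondegenerate symmetric bilinear form $\langle\cdot,\cdot\rangle$, an $\mathbb R$-bilinear bracket $[\cdot,\cdot]$ on $\Gamma(E)$ and bundle map $\pi:E\to TM$ such that for $u,v,w\in\Gamma(E)$, $f\in C^\infty(M)$: $[u,[v,w]]=[[u,v],w]+[v,[u,w]]$; $\pi([u,v])=[\pi(u),\pi(v)]$; $[u,fv]=\pi(u)(f)v+f[u,v]$; $\pi(u)\langle v,w\rangle=\langle[u,v],w\rangle+\langle v,[u,w]\rangle$; $2\langle[u,u],v\rangle=\pi(v)\langle u,u\rangle$. A generalized connection is an $\mathbb R$-linear $D:\Gamma(E)\to\Gamma(E^*\otimes E)$ with $D_u(fv)=\pi(u)(f)v+fD_uv$ and $\pi(u)\langle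 v,w\rangle=\langle D_uv,w\rangle+\langle v,D_uw\rangle$; its torsion is $T^D(u,v)=D_uv-D_vu-[u,v]+(Du)^*v$ ($(Du)^*$ adjoint of $w\mapsto D_wu$), $T^D(u,v,w)=\langle T^D(u,v),w\rangle$. A generalized almost complex structure is a $\langle\cdot,\cdot\rangle$-orthogonal $\mathcal J$ with $\mathcal J^2=-\mathrm{Id}$; $N_{\mathcal J}(u,v)=[\mathcal Ju,\mathcal Jv]-[u,v]-\mathcal J([\mathcal Ju,v]+[u,\mathcal Jv])$, $N_{\mathcal J}(u,v,w)=\langle N_{\mathcal J}(u,v),w\rangle$; $\mathcal J$ is integrable if $N_{\mathcal J}=0$. *)

theory Defs
  imports Main "HOL.Real_Vector_Spaces"
begin

text \<open>The type 'r plays the role of the commutative real algebra C^infinity(M);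
  the type 's plays the role of the module of sections Gamma(E), with
  module action sm f u = f u.  The anchor is given on sections:
  anc u is the vector field pi(u), acting as a derivation on functions.
  Real scalars c act on sections through sm (of_real c).\<close>

definition module_over :: "('r::comm_ring_1 \<Rightarrow> 's::ab_group_add \<Rightarrow> 's) \<Rightarrow> bool" where
  "module_over sm \<longleftrightarrow>
     (\<forall>f u v. sm f (u + v) = sm f u + sm f v) \<and>
     (\<forall>f g u. sm (f + g) u = sm f u + sm g u) \<and>
     (\<forall>f g u. sm (f * g) u = sm f (sm g u)) \<and>
     (\<forall>u. sm 1 u = u)"

text \<open>C^infinity(M)-linear functionals on sections (= sections of E^*).\<close>
definition functional :: "('r::comm_ring_1 \<Rightarrow> 's::ab_group_add \<Rightarrow> 's) \<Rightarrow> ('s \<Rightarrow> 'r) \<Rightarrow> bool" where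
  "functional sm \<phi> \<longleftrightarrow>
     (\<forall>u v. \<phi> (u + v) = \<phi> u + \<phi> v) \<and> (\<forall>f u. \<phi> (sm f u) = f * \<phi> u)"

text \<open>C^infinity(M)-linear endomorphisms of sections (= bundle endomorphisms).\<close>
definition endo :: "('r::comm_ring_1 \<Rightarrow> 's::ab_group_add \<Rightarrow> 's) \<Rightarrow> ('s \<Rightarrow> 's) \<Rightarrow> bool" where
  "endo sm A \<longleftrightarrow> (\<forall>f u v. A (sm f u + v) = sm f (A u) + A v)"

definition sym_bilinear :: "('r::comm_ring_1 \<Rightarrow> 's::ab_group_add \<Rightarrow> 's) \<Rightarrow> ('s \<Rightarrow> 's \<Rightarrow> 'r) \<Rightarrow> bool" where
  "sym_bilinear sm ip \<longleftrightarrow>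
     (\<forall>u v. ip u v = ip v u) \<and>
     (\<forall>f u u' v. ip (sm f u + u') v = f * ip u v + ip u' v)"

text \<open>Nondegeneracy: the musical map E \<rightarrow> E^* is an isomorphism on sections.\<close>
definition nondegenerate :: "('r::comm_ring_1 \<Rightarrow> 's::ab_group_add \<Rightarrow> 's) \<Rightarrow> ('s \<Rightarrow> 's \<Rightarrow> 'r) \<Rightarrow> bool" where
  "nondegenerate sm ip \<longleftrightarrow>
     (\<forall>\<phi>. functional sm \<phi> \<longrightarrow> (\<exists>!w. \<forall>u. \<phi> u = ip w u))"

text \<open>Anchor: C^infinity(M)-linear map from sections to vector fields
  (real-linear derivations of C^infinity(M)).\<close>
definition anchor_map :: "('r::{comm_ring_1,real_algebra_1} \<Rightarrow> 's::ab_group_add \<Rightarrow> 's) \<Rightarrow> ('s \<Rightarrow> 'r \<Rightarrow> 'r) \<Rightarrow> bool" where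
  "anchor_map sm anc \<longleftrightarrow>
     (\<forall>f u v g. anc (sm f u + v) g = f * anc u g + anc v g) \<and>
     (\<forall>u g h. anc u (g + h) = anc u g + anc u h) \<and>
     (\<forall>u g h. anc u (g * h) = anc u g * h + g * anc u h) \<and>
     (\<forall>u c g. anc u (of_real c * g) = of_real c * anc u g)"

definition real_bilinear :: "('r::{comm_ring_1,real_algebra_1} \<Rightarrow> 's::ab_group_add \<Rightarrow> 's) \<Rightarrow> ('s \<Rightarrow> 's \<Rightarrow> 's) \<Rightarrow> bool" where
  "real_bilinear sm br \<longleftrightarrow>
     (\<forall>u u' v. br (u + u') v = br u v + br u' v) \<and>
     (\<forall>u v v'. br u (v + v') = br u v + br u v') \<and>
     (\<forall>c u v. br (sm (of_real c) u) v = sm (of_real c) (br u v)) \<and>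
     (\<forall>c u v. br u (sm (of_real c) v) = sm (of_real c) (br u v))"

definition courant_algebroid ::
  "('r::{comm_ring_1,real_algebra_1} \<Rightarrow> 's::ab_group_add \<Rightarrow> 's) \<Rightarrow> ('s \<Rightarrow> 's \<Rightarrow> 'r) \<Rightarrow>
   ('s \<Rightarrow> 's \<Rightarrow> 's) \<Rightarrow> ('s \<Rightarrow> 'r \<Rightarrow> 'r) \<Rightarrow> bool" where
  "courant_algebroid sm ip br anc \<longleftrightarrow>
     module_over sm \<and> sym_bilinear sm ip \<and> nondegenerate sm ip \<and>
     anchor_map sm anc \<and> real_bilinear sm br \<and>
     (\<forall>u v w. br u (br v w) = br (br u v) w + br v (br u w)) \<and>
     (\<forall>u v g. anc (br u v) g = anc u (anc v g) - anc v (anc u g)) \<and>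
     (\<forall>u v f. br u (sm f v) = sm (anc u f) v + sm f (br u v)) \<and>
     (\<forall>u v w. anc u (ip v w) = ip (br u v) w + ip v (br u w)) \<and>
     (\<forall>u v. 2 * ip (br u u) v = anc v (ip u u))"

text \<open>Generalized connection D, written D u v = D_u v.  C^infinity(M)-linearity in u
  expresses that D v is a section of E^* \<otimes> E.\<close>
definition gen_connection ::
  "('r::{comm_ring_1,real_algebra_1} \<Rightarrow> 's::ab_group_add \<Rightarrow> 's) \<Rightarrow> ('s \<Rightarrow> 's \<Rightarrow> 'r) \<Rightarrow>
   ('s \<Rightarrow> 'r \<Rightarrow> 'r) \<Rightarrow> ('s \<Rightarrow> 's \<Rightarrow> 's) \<Rightarrow> bool" where
  "gen_connection sm ip anc D \<longleftrightarrow>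
     (\<forall>f u u' v. D (sm f u + u') v = sm f (D u v) + D u' v) \<and>
     (\<forall>u v v'. D u (v + v') = D u v + D u v') \<and>
     (\<forall>c u v. D u (sm (of_real c) v) = sm (of_real c) (D u v)) \<and>
     (\<forall>u v f. D u (sm f v) = sm (anc u f) v + sm f (D u v)) \<and>
     (\<forall>u v w. anc u (ip v w) = ip (D u v) w + ip v (D u w))"

definition adjoint :: "('s \<Rightarrow> 's \<Rightarrow> 'r) \<Rightarrow> ('s \<Rightarrow> 's) \<Rightarrow> 's \<Rightarrow> 's" where
  "adjoint ip A v = (THE z. \<forall>w. ip z w = ip v (A w))"

definition torsion ::
  "('s::ab_group_add \<Rightarrow> 's \<Rightarrow> 'r) \<Rightarrow> ('s \<Rightarrow> 's \<Rightarrow> 's) \<Rightarrow> ('s \<Rightarrow> 's \<Rightarrow> 's) \<Rightarrow> 's \<Rightarrow> 's \<Rightarrow> 's" where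
  "torsion ip br D u v = D u v - D v u - br u v + adjoint ip (\<lambda>w. D w u) v"

definition gen_almost_complex ::
  "('r::comm_ring_1 \<Rightarrow> 's::ab_group_add \<Rightarrow> 's) \<Rightarrow> ('s \<Rightarrow> 's \<Rightarrow> 'r) \<Rightarrow> ('s \<Rightarrow> 's) \<Rightarrow> bool" where
  "gen_almost_complex sm ip J \<longleftrightarrow>
     endo sm J \<and> (\<forall>u v. ip (J u) (J v) = ip u v) \<and> (\<forall>u. J (J u) = - u)"

definition nijenhuis :: "('s::ab_group_add \<Rightarrow> 's \<Rightarrow> 's) \<Rightarrow> ('s \<Rightarrow> 's) \<Rightarrow> 's \<Rightarrow> 's \<Rightarrow> 's" where
  "nijenhuis br J u v = br (J u) (J v) - br u v - J (br (J u) v + br u (J v))"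

definition covD :: "('s::ab_group_add \<Rightarrow> 's \<Rightarrow> 's) \<Rightarrow> ('s \<Rightarrow> 's) \<Rightarrow> 's \<Rightarrow> 's \<Rightarrow> 's" where
  "covD D J u v = D u (J v) - J (D u v)"

definition A_endo :: "('s::ab_group_add \<Rightarrow> 's \<Rightarrow> 's) \<Rightarrow> ('s \<Rightarrow> 's) \<Rightarrow> 's \<Rightarrow> 's \<Rightarrow> 's" where
  "A_endo D J u = (\<lambda>v. covD D J v u)"

definition sym_part :: "('r::real_algebra_1 \<Rightarrow> 's::ab_group_add \<Rightarrow> 's) \<Rightarrow> ('s \<Rightarrow> 's \<Rightarrow> 'r) \<Rightarrow> ('s \<Rightarrow> 's) \<Rightarrow> 's \<Rightarrow> 's" where
  "sym_part sm ip A = (\<lambda>v. sm (of_real (1/2)) (A v + adjoint ip A v))"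

definition modified_conn ::
  "('r::real_algebra_1 \<Rightarrow> 's::ab_group_add \<Rightarrow> 's) \<Rightarrow> ('s \<Rightarrow> 's \<Rightarrow> 'r) \<Rightarrow>
   ('s \<Rightarrow> 's \<Rightarrow> 's) \<Rightarrow> ('s \<Rightarrow> 's) \<Rightarrow> 's \<Rightarrow> 's \<Rightarrow> 's" where
  "modified_conn sm ip D J u v =
     (let As = sym_part sm ip (A_endo D J u) in
      D u v - sm (of_real (1/4)) (As (J v) + J (As v))
            - sm (of_real (1/2)) (J (covD D J u v)))"

end

(* A torsion-free generalized connection determines the Dorfman bracket:
   <[u,v],w> = <D_u v - D_v u, w> + <D_w u, v>.  Hence, writing
   Phi x y z = <(D_x J) y, z>, both the Nijenhuis tensor and the torsion of the
   modified connection (whose difference from D is a combination of Phi) become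
   linear combinations of Phi, in which all derivatives of sections cancel.
   Phi is skew in its last two arguments, also after twisting by J because
   D_x J anticommutes with J, and these symmetries match the two combinations up
   to the factor 1/4. *)

theory Submission
  imports Defs
begin

locale metric_module =
  fixes sm :: "'r::comm_ring_1 \<Rightarrow> 's::ab_group_add \<Rightarrow> 's"
    and ip :: "'s \<Rightarrow> 's \<Rightarrow> 'r"
  assumes module: "module_over sm"
    and symmetric: "sym_bilinear sm ip"
    and nondeg: "nondegenerate sm ip"
begin

lemma sm_add_right: "sm f (u + v) = sm f u + sm f v"
  and sm_one: "sm 1 u = u"
  using module unfolding module_over_def by auto

lemma sm_zero_right: "sm f 0 = 0"
  using sm_add_right[of f 0 0] by simp

lemma sm_minus_right: "sm f (- u) = - sm f u"
  by (metis add.right_inverse minus_unique sm_add_right sm_zero_right)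

lemma sm_diff_right: "sm f (u - v) = sm f u - sm f v"
  using sm_add_right[of f u "- v"] by (simp add: sm_minus_right)

lemma ip_sym: "ip u v = ip v u"
  and ip_scale_add_left: "ip (sm f u + u') v = f * ip u v + ip u' v"
  using symmetric unfolding sym_bilinear_def by auto

lemma ip_add_left: "ip (u + u') v = ip u v + ip u' v"
  using ip_scale_add_left[of 1 u u' v] by (simp add: sm_one)

lemma ip_zero_left: "ip 0 v = 0"
  using ip_add_left[of 0 0 v] by simp

lemma ip_scale_left: "ip (sm f u) v = f * ip u v"
  using ip_scale_add_left[of f u 0 v] by (simp add: ip_zero_left)

lemma ip_minus_left: "ip (- u) v = - ip u v"
  by (metis add.right_inverse ip_add_left ip_zero_left minus_unique)

lemma ip_diff_left: "ip (u - u') v = ip u v - ip u' v"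
  using ip_add_left[of u "- u'" v] by (simp add: ip_minus_left)

lemma ip_add_right: "ip v (u + u') = ip v u + ip v u'"
  and ip_scale_right: "ip v (sm f u) = f * ip v u"
  and ip_minus_right: "ip v (- u) = - ip v u"
  and ip_diff_right: "ip v (u - u') = ip v u - ip v u'"
  by (simp_all add: ip_sym[of v] ip_add_left ip_scale_left ip_minus_left ip_diff_left)

lemmas ip_linear = ip_add_left ip_scale_left ip_minus_left ip_diff_left
  ip_add_right ip_scale_right ip_minus_right ip_diff_right

lemma ip_eqI: "(\<And>w. ip x w = ip y w) \<Longrightarrow> x = y"
proof -
  assume "\<And>w. ip x w = ip y w"
  moreover have "functional sm (ip y)"
    unfolding functional_def by (simp add: ip_add_right ip_scale_right)
  ultimately show "x = y"
    using nondeg unfolding nondegenerate_def by metis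
qed

lemma endo_add: "endo sm A \<Longrightarrow> A (u + v) = A u + A v"
  unfolding endo_def by (metis sm_one)

lemma endo_zero: "endo sm A \<Longrightarrow> A 0 = 0"
  using endo_add[of A 0 0] by simp

lemma endo_scale: "endo sm A \<Longrightarrow> A (sm f u) = sm f (A u)"
  unfolding endo_def by (metis add.right_neutral endo_def endo_zero)

lemma endo_minus: "endo sm A \<Longrightarrow> A (- u) = - A u"
  by (metis add.right_inverse endo_add endo_zero minus_unique)

lemma adjoint_ip:
  assumes "endo sm A"
  shows "ip (adjoint ip A v) w = ip v (A w)"
proof -
  have "functional sm (\<lambda>w. ip v (A w))"
    unfolding functional_def using assms
    by (simp add: endo_add endo_scale ip_add_right ip_scale_right)
  then obtain z where z: "\<forall>w. ip v (A w) = ip z w"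
    and uniq: "\<And>z'. \<forall>w. ip v (A w) = ip z' w \<Longrightarrow> z' = z"
    using nondeg unfolding nondegenerate_def by metis
  have "adjoint ip A v = z"
    unfolding adjoint_def by (rule the_equality) (use z uniq in auto)
  with z show ?thesis by simp
qed

lemma torsion_ip:
  assumes "endo sm (\<lambda>w. D w u)"
  shows "ip (torsion ip br D u v) w = ip (D u v) w - ip (D v u) w - ip (br u v) w + ip (D w u) v"
  unfolding torsion_def by (simp add: ip_add_left ip_diff_left adjoint_ip[OF assms] ip_sym[of v])

end

locale almost_complex_metric_module = metric_module +
  fixes J :: "'s::ab_group_add \<Rightarrow> 's"
  assumes almost_complex: "gen_almost_complex sm ip J"
begin

lemma J_endo: "endo sm J"
  and J_J: "J (J u) = - u"
  and ip_J_J: "ip (J u) (J v) = ip u v"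
  using almost_complex unfolding gen_almost_complex_def by auto

lemma J_add: "J (u + v) = J u + J v"
  and J_scale: "J (sm f u) = sm f (J u)"
  and J_minus: "J (- u) = - J u"
  using endo_add endo_scale endo_minus J_endo by blast+

lemma J_diff: "J (u - v) = J u - J v"
  using J_add[of u "- v"] by (simp add: J_minus)

lemma ip_J_left: "ip (J u) v = - ip u (J v)"
  using ip_J_J[of u "J v"] by (simp add: J_J ip_minus_right minus_equation_iff)

end

locale connection_metric_module = metric_module sm ip
  for sm :: "'r::{comm_ring_1,real_algebra_1} \<Rightarrow> 's::ab_group_add \<Rightarrow> 's" and ip +
  fixes anc :: "'s \<Rightarrow> 'r \<Rightarrow> 'r"
    and D :: "'s \<Rightarrow> 's \<Rightarrow> 's"
  assumes connection: "gen_connection sm ip anc D"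
begin

lemma D_scale_add_left: "D (sm f u + u') v = sm f (D u v) + D u' v"
  and D_add_right: "D u (v + v') = D u v + D u v'"
  and D_of_real_right: "D u (sm (of_real c) v) = sm (of_real c) (D u v)"
  and D_leibniz: "D u (sm f v) = sm (anc u f) v + sm f (D u v)"
  and D_metric: "anc u (ip v w) = ip (D u v) w + ip v (D u w)"
  using connection unfolding gen_connection_def by auto

lemma D_endo_left: "endo sm (\<lambda>w. D w u)"
  unfolding endo_def by (simp add: D_scale_add_left)

lemma D_add_left: "D (u + u') v = D u v + D u' v"
  and D_scale_left: "D (sm f u) v = sm f (D u v)"
  and D_minus_left: "D (- u) v = - D u v"
  using endo_add endo_scale endo_minus D_endo_left by blast+

lemma D_minus_right: "D u (- v) = - D u v"
  using D_add_right[of u v "- v"] D_add_right[of u 0 0] by (simp add: minus_unique)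

lemma scale_anchor_of_real: "sm (anc u (of_real c)) v = 0"
  using D_leibniz[of u "of_real c" v] by (simp add: D_of_real_right)

end

locale connection_almost_complex =
  connection_metric_module sm ip anc D + almost_complex_metric_module sm ip J
  for sm :: "'r::{comm_ring_1,real_algebra_1} \<Rightarrow> 's::ab_group_add \<Rightarrow> 's" and ip anc D J
begin

abbreviation DJ ("\<Phi>")
  where "\<Phi> x y z \<equiv> ip (covD D J x y) z"

lemma D_J_right: "D x (J y) = covD D J x y + J (D x y)"
  unfolding covD_def by simp

lemma covD_endo_left: "endo sm (\<lambda>x. covD D J x y)"
  unfolding endo_def covD_def by (simp add: D_scale_add_left J_add J_scale sm_diff_right)

lemma covD_add_left: "covD D J (x + x') y = covD D J x y + covD D J x' y"
  and covD_scale_left: "covD D J (sm f x) y = sm f (covD D J x y)"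
  and covD_minus_left: "covD D J (- x) y = - covD D J x y"
  using endo_add endo_scale endo_minus covD_endo_left by blast+

lemma covD_add_right: "covD D J x (y + y') = covD D J x y + covD D J x y'"
  and covD_scale_right: "covD D J x (sm f y) = sm f (covD D J x y)"
  unfolding covD_def by (simp_all add: D_add_right J_add D_leibniz J_scale sm_diff_right)

lemma covD_minus_right: "covD D J x (- y) = - covD D J x y"
  unfolding covD_def by (simp add: D_minus_right J_minus)

lemma covD_J_right: "covD D J x (J y) = - J (covD D J x y)"
  unfolding covD_def by (simp add: J_J D_minus_right J_minus J_diff)

text \<open>Differentiating the skew relation ip (J y) z = - ip y (J z) along x.\<close>

lemma covD_skew: "\<Phi> x y z = - \<Phi> x z y"
proof -
  have "anc x (ip (J y) z) = anc x (ip (- y) (J z))"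
    by (simp add: ip_J_left ip_minus_left)
  then have "ip (D x (J y)) z + ip (J y) (D x z) = ip (D x (- y)) (J z) + ip (- y) (D x (J z))"
    by (simp only: D_metric)
  then show ?thesis
    unfolding covD_def
    by (simp add: ip_linear ip_J_left D_minus_right ip_sym[of y] ip_sym[of "J y"]
        algebra_simps eq_neg_iff_add_eq_0)
qed

lemma covD_skew_J: "\<Phi> x y (J z) = - \<Phi> x z (J y)"
  by (metis covD_J_right covD_skew ip_J_left ip_minus_left)

lemma covD_J_J: "\<Phi> x (J y) (J z) = - \<Phi> x y z"
  by (simp add: covD_J_right ip_minus_left ip_J_J)

lemma ip_sym_part_A_endo:
  "ip (sym_part sm ip (A_endo D J u) x) w = of_real (1/2) * (\<Phi> x u w + \<Phi> w u x)"
proof -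
  have "endo sm (A_endo D J u)"
    unfolding A_endo_def by (rule covD_endo_left)
  then show ?thesis
    unfolding sym_part_def
    by (simp add: ip_scale_left ip_add_left adjoint_ip ip_sym[of x]) (simp add: A_endo_def)
qed

lemma modified_conn_ip: "ip (modified_conn sm ip D J u v) w = ip (D u v) w
   - of_real (1/8) * (\<Phi> (J v) u w + \<Phi> w u (J v) - \<Phi> v u (J w) - \<Phi> (J w) u v)
   + of_real (1/2) * \<Phi> u v (J w)"
proof -
  have "(of_real (1/4) :: 'r) * of_real (1/2) = of_real (1/8)"
    by (simp flip: of_real_mult)
  then show ?thesis
    unfolding modified_conn_def Let_def
    by (simp add: ip_linear ip_J_left[of "sym_part _ _ _ _"] ip_J_left[of "covD D J u v"]
        ip_sym_part_A_endo algebra_simps flip: mult.assoc)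
qed

lemmas linear_simps = ip_linear J_add J_scale J_minus
  D_add_left D_scale_left D_minus_left D_add_right D_minus_right
  covD_add_left covD_scale_left covD_minus_left covD_add_right covD_scale_right covD_minus_right

lemma modified_conn_scale_add_left:
  "modified_conn sm ip D J (sm f u + u') v
    = sm f (modified_conn sm ip D J u v) + modified_conn sm ip D J u' v"
  by (rule ip_eqI) (simp add: modified_conn_ip linear_simps algebra_simps)

lemma modified_conn_add_right:
  "modified_conn sm ip D J u (v + v') = modified_conn sm ip D J u v + modified_conn sm ip D J u v'"
  by (rule ip_eqI) (simp add: modified_conn_ip linear_simps algebra_simps)

lemma modified_conn_leibniz:
  "modified_conn sm ip D J u (sm f v) = sm (anc u f) v + sm f (modified_conn sm ip D J u v)"
  by (rule ip_eqI) (simp add: modified_conn_ip linear_simps D_leibniz algebra_simps)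

lemma modified_conn_metric:
  "anc u (ip v w) = ip (modified_conn sm ip D J u v) w + ip v (modified_conn sm ip D J u w)"
  using D_metric[of u v w] covD_skew_J[of u w v]
  by (simp add: modified_conn_ip ip_sym[of v] ip_sym[of "D u v"] algebra_simps)

lemma gen_connection_modified_conn: "gen_connection sm ip anc (modified_conn sm ip D J)"
  unfolding gen_connection_def
  using modified_conn_scale_add_left modified_conn_add_right modified_conn_leibniz
    modified_conn_metric scale_anchor_of_real by simp

lemma modified_conn_J: "modified_conn sm ip D J u (J v) = J (modified_conn sm ip D J u v)"
proof (rule ip_eqI)
  fix w
  have half: "of_real (1/2) * \<Phi> u v w + of_real (1/2) * \<Phi> u v w = \<Phi> u v w"
    by (simp flip: distrib_right of_real_add)
  show "ip (modified_conn sm ip D J u (J v)) w = ip (J (modified_conn sm ip D J u v)) w"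
    using half
    by (simp add: ip_J_left[of "modified_conn _ _ _ _ _ _"] modified_conn_ip D_J_right
        ip_J_left[of "D u v"] covD_J_J J_J linear_simps algebra_simps)
qed

end

locale torsion_free_connection_almost_complex =
  connection_almost_complex sm ip anc D J
  for sm :: "'r::{comm_ring_1,real_algebra_1} \<Rightarrow> 's::ab_group_add \<Rightarrow> 's" and ip anc D J +
  fixes br :: "'s \<Rightarrow> 's \<Rightarrow> 's"
  assumes torsion_free: "\<forall>u v. torsion ip br D u v = 0"
begin

lemma bracket_ip: "ip (br u v) w = ip (D u v) w - ip (D v u) w + ip (D w u) v"
proof -
  have "ip (torsion ip br D u v) w = 0"
    using torsion_free by (simp add: ip_zero_left)
  then show ?thesis
    unfolding torsion_ip[of D u br v w, OF D_endo_left]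
    by (simp add: algebra_simps eq_neg_iff_add_eq_0 diff_eq_eq)
qed

lemma nijenhuis_ip: "ip (nijenhuis br J u v) w =
    \<Phi> (J u) v w - \<Phi> (J v) u w + \<Phi> (J w) u v + \<Phi> u v (J w) - \<Phi> v u (J w) + \<Phi> w u (J v)"
  unfolding nijenhuis_def
  by (simp add: ip_linear ip_J_left bracket_ip D_J_right J_J algebra_simps)

lemma torsion_modified_conn_ip: "ip (torsion ip br (modified_conn sm ip D J) u v) w =
    of_real (1/4) * (\<Phi> (J u) v w - \<Phi> (J v) u w + \<Phi> (J w) u v
                     + \<Phi> u v (J w) - \<Phi> v u (J w) + \<Phi> w u (J v))"
proof -
  have endo: "endo sm (\<lambda>w. modified_conn sm ip D J w u)"
    unfolding endo_def by (simp add: modified_conn_scale_add_left)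
  have "(of_real (1/2) :: 'r) = of_real (4 * (1/8))" "(of_real (1/4) :: 'r) = of_real (2 * (1/8))"
    by simp_all
  then have "(of_real (1/2) :: 'r) = 4 * of_real (1/8)" "(of_real (1/4) :: 'r) = 2 * of_real (1/8)"
    by (simp_all only: of_real_mult of_real_numeral)
  then show ?thesis
    unfolding torsion_ip[of "modified_conn sm ip D J" u, OF endo] bracket_ip
    by (simp add: modified_conn_ip covD_skew[of _ v u] covD_skew[of _ w u] covD_skew[of _ w v]
        covD_skew_J[of _ v u] covD_skew_J[of _ w u] covD_skew_J[of _ w v] algebra_simps)
qed

end

theorem proposition3p6:
  fixes sm :: "'r::{comm_ring_1,real_algebra_1} \<Rightarrow> 's::ab_group_add \<Rightarrow> 's"
    and ip :: "'s \<Rightarrow> 's \<Rightarrow> 'r"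
    and br :: "'s \<Rightarrow> 's \<Rightarrow> 's"
    and anc :: "'s \<Rightarrow> 'r \<Rightarrow> 'r"
    and D :: "'s \<Rightarrow> 's \<Rightarrow> 's"
    and J :: "'s \<Rightarrow> 's"
  assumes "courant_algebroid sm ip br anc"
    and "gen_almost_complex sm ip J"
    and "gen_connection sm ip anc D"
    and "\<forall>u v. torsion ip br D u v = 0"
  shows "gen_connection sm ip anc (modified_conn sm ip D J)
    \<and> (\<forall>u v. modified_conn sm ip D J u (J v) = J (modified_conn sm ip D J u v))
    \<and> (\<forall>u v w. ip (torsion ip br (modified_conn sm ip D J) u v) w
                = of_real (1/4) * ip (nijenhuis br J u v) w)
    \<and> ((\<forall>u v. nijenhuis br J u v = 0) \<longrightarrow>
         (\<forall>u v. torsion ip br (modified_conn sm ip D J) u v = 0)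
         \<and> (\<forall>u v. modified_conn sm ip D J u (J v) = J (modified_conn sm ip D J u v)))"
proof -
  interpret torsion_free_connection_almost_complex sm ip anc D J br
    using assms by unfold_locales (simp_all add: courant_algebroid_def)
  have torsion: "ip (torsion ip br (modified_conn sm ip D J) u v) w
      = of_real (1/4) * ip (nijenhuis br J u v) w" for u v w
    by (simp add: torsion_modified_conn_ip nijenhuis_ip)
  have "torsion ip br (modified_conn sm ip D J) u v = 0"
    if "\<forall>u v. nijenhuis br J u v = 0" for u v
    by (rule ip_eqI) (simp add: torsion that ip_zero_left)
  then show ?thesis
    using gen_connection_modified_conn modified_conn_J torsion by blast
qed

end
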